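(* Let $r\ge3$ and $n\ge1$ be integers and put $q_k=\frac{1+r^k(r-2)}{r-1}$ for $k\in\mathbb Z_{\ge0}$. If $B\subseteq\mathbb Z_{q_n}^n$ is an independent set in $C_{q_{n-1},q_n}^{\boxtimes n}$ with $|B|=q_n$, then for every coordinate $i\in\{1,\dots,n\}$ and every symbol $s\in\mathbb Z_{q_n}$ there is exactly one $b\in B$ with $b_i=s$.
   Context: For positive integers $q,d$ with $q\ge 2d$, the circular graph $C_{d,q}$ has vertex set $\mathbb Z_q$, two distinct vertices $x,y$ being adjacent iff $\min\{|x-y|,q-|x-y|\}<d$ (viewing $x,y$ as integers in $\{0,\dots,q-1\}$). For a graph $G=(V,E)$, $G^{\boxtimes n}$ has vertex set $V^n$, distinct $(u_i)$, $(v_i)$ adjacent iff for every $i$ either $u_i=v_i$ or $u_iv_i\in E$. An independent set is a set of pairwise non-adjacent vertices. *)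

theory Defs
  imports Main
begin

text \<open>Vertices of the circular graph C_{d,q} are 0..q-1 (representing Z_q).\<close>

definition circ_dist :: "nat \<Rightarrow> nat \<Rightarrow> nat \<Rightarrow> nat" where
  "circ_dist q x y = (let a = (if x \<le> y then y - x else x - y) in min a (q - a))"

definition circ_adj :: "nat \<Rightarrow> nat \<Rightarrow> nat \<Rightarrow> nat \<Rightarrow> bool" where
  "circ_adj d q x y \<longleftrightarrow> x < q \<and> y < q \<and> x \<noteq> y \<and> circ_dist q x y < d"

definition strong_pow_verts :: "nat \<Rightarrow> nat \<Rightarrow> nat list set" where
  "strong_pow_verts q n = {u. length u = n \<and> (\<forall>i<n. u ! i < q)}"

definition strong_pow_adj :: "nat \<Rightarrow> nat \<Rightarrow> nat \<Rightarrow> nat list \<Rightarrow> nat list \<Rightarrow> bool" where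
  "strong_pow_adj d q n u v \<longleftrightarrow>
     u \<in> strong_pow_verts q n \<and> v \<in> strong_pow_verts q n \<and> u \<noteq> v \<and>
     (\<forall>i<n. u ! i = v ! i \<or> circ_adj d q (u ! i) (v ! i))"

definition indep_strong_pow :: "nat \<Rightarrow> nat \<Rightarrow> nat \<Rightarrow> nat list set \<Rightarrow> bool" where
  "indep_strong_pow d q n B \<longleftrightarrow>
     B \<subseteq> strong_pow_verts q n \<and> (\<forall>u\<in>B. \<forall>v\<in>B. \<not> strong_pow_adj d q n u v)"

text \<open>q_k = (1 + r^k (r-2)) / (r-1); the division is exact since r^k = 1 mod (r-1).\<close>
definition qseq :: "nat \<Rightarrow> nat \<Rightarrow> nat" where
  "qseq r k = (1 + r ^ k * (r - 2)) div (r - 1)"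

end

theory Submission
  imports Defs "HOL-Number_Theory.Cong"
begin

text \<open>
  Write d = q_{n-1} and q = q_n, so that q + 1 = r d. Fix a coordinate i. Words of an
  independent set whose i-th symbol lies in one arc x, ..., x + d - 1 of Z_q are equal or
  adjacent in coordinate i, so they form an independent set on the remaining coordinates.
  Every word lies in exactly d of the q arcs, so double counting gives
  d |A| <= q q_{k-1} < r d q_{k-1}, and by induction an independent set on k coordinates has
  at most q_k elements. If |B| = q_n, equality holds throughout: every arc contains exactly d
  words of B. Then the fibre sizes c(s) = |{b in B. b_i = s}| have equal sums over all arcs,
  so c is d-periodic; since r d = 1 (mod q), c is constant, hence identically 1.
\<close>

lemma qseq_mult_exact:
  assumes "r \<ge> 2"
  shows "(r - 1) * qseq r k = 1 + r ^ k * (r - 2)"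
proof -
  have "[r = 1] (mod r - 1)"
    using assms by (metis cong_def le_add_diff_inverse2 mod_add_self2 add.commute one_le_numeral order_trans)
  then have "[1 + r ^ k * (r - 2) = 1 + 1 ^ k * (r - 2)] (mod r - 1)"
    by (intro cong_add cong_mult cong_pow) auto
  also have "1 + 1 ^ k * (r - 2) = r - 1"
    using assms by simp
  also have "[r - 1 = 0] (mod r - 1)"
    by (simp add: cong_def)
  finally have "(r - 1) dvd (1 + r ^ k * (r - 2))"
    by (simp only: cong_0_iff)
  then show ?thesis
    unfolding qseq_def by (rule dvd_mult_div_cancel)
qed

lemma qseq_0: "r \<ge> 2 \<Longrightarrow> qseq r 0 = 1"
  unfolding qseq_def by (simp add: Suc_diff_Suc numeral_2_eq_2)

lemma qseq_Suc:
  assumes "r \<ge> 2"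
  shows "qseq r (Suc k) + 1 = r * qseq r k"
proof -
  have "(r - 1) * (qseq r (Suc k) + 1) = 1 + r * r ^ k * (r - 2) + (r - 1)"
    using qseq_mult_exact[OF assms, of "Suc k"] by (simp only: add_mult_distrib2 power_Suc mult_1_right)
  also have "\<dots> = r * (1 + r ^ k * (r - 2))"
    using assms by (simp add: add_mult_distrib2)
  also have "\<dots> = (r - 1) * (r * qseq r k)"
    unfolding qseq_mult_exact[OF assms, of k, symmetric] by (simp only: ac_simps)
  finally show ?thesis
    using assms by (simp only: mult_cancel1) simp
qed

lemma qseq_pos: "r \<ge> 2 \<Longrightarrow> qseq r k \<ge> 1"
proof (induction k)
  case (Suc k)
  then have "r * qseq r k \<ge> 2" using mult_le_mono by fastforce
  then show ?case using qseq_Suc[OF Suc.prems, of k] by simp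
qed (simp add: qseq_0)

lemma qseq_le_Suc: "r \<ge> 2 \<Longrightarrow> qseq r k \<le> qseq r (Suc k)"
  using qseq_Suc[of r k] qseq_pos[of r k] mult_le_mono1[of 2 r "qseq r k"] by linarith

definition indep_on_coords :: "nat \<Rightarrow> nat \<Rightarrow> nat set \<Rightarrow> nat list set \<Rightarrow> bool" where
  "indep_on_coords d q I A \<longleftrightarrow> (\<forall>u\<in>A. \<forall>v\<in>A. u \<noteq> v \<longrightarrow>
     (\<exists>j\<in>I. u ! j \<noteq> v ! j \<and> \<not> circ_adj d q (u ! j) (v ! j)))"

definition fibre_card :: "nat list set \<Rightarrow> nat \<Rightarrow> nat \<Rightarrow> nat" where
  "fibre_card A i y = card {a\<in>A. a ! i = y}"

definition window :: "nat list set \<Rightarrow> nat \<Rightarrow> nat \<Rightarrow> nat \<Rightarrow> nat \<Rightarrow> nat list set" where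
  "window A i d q x = {a\<in>A. \<exists>t<d. a ! i = (x + t) mod q}"

lemma finite_strong_pow_verts: "finite (strong_pow_verts q n)"
proof -
  have "strong_pow_verts q n \<subseteq> {xs. set xs \<subseteq> {..<q} \<and> length xs = n}"
    unfolding strong_pow_verts_def by (auto simp: in_set_conv_nth)
  then show ?thesis
    using finite_lists_length_eq[of "{..<q}" n] finite_subset by auto
qed

lemma indep_on_coords_if_indep_strong_pow:
  "indep_strong_pow d q n B \<Longrightarrow> indep_on_coords d q {..<n} B"
  unfolding indep_strong_pow_def indep_on_coords_def strong_pow_adj_def by blast

lemma card_le_1_if_indep_on_coords_empty:
  "indep_on_coords d q {} A \<Longrightarrow> card A \<le> 1"
  unfolding indep_on_coords_def by (cases "finite A") (auto simp: card_le_Suc0_iff_eq)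

lemma add_mod_left_cancel_less:
  fixes x t t' :: nat
  assumes "(x + t) mod q = (x + t') mod q" "t < d" "t' < d" "d \<le> q"
  shows "t = t'"
proof -
  have "[t = t'] (mod q)"
    using assms(1) by (simp add: cong_def[symmetric] cong_add_lcancel_nat)
  then show ?thesis
    using assms(2-4) by (simp add: cong_def)
qed

lemma card_eq_sum_fibre_card:
  assumes "finite A" "\<forall>a\<in>A. a ! i < q"
  shows "card A = (\<Sum>y<q. fibre_card A i y)"
proof -
  have "A = (\<Union>y<q. {a\<in>A. a ! i = y})"
    using assms(2) by auto
  also have "card \<dots> = (\<Sum>y<q. fibre_card A i y)"
    unfolding fibre_card_def using assms(1) by (intro card_UN_disjoint) auto
  finally show ?thesis .
qed

lemma card_window:
  assumes "finite A" "d \<le> q"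
  shows "card (window A i d q x) = (\<Sum>t<d. fibre_card A i ((x + t) mod q))"
proof -
  have "window A i d q x = (\<Union>t<d. {a\<in>A. a ! i = (x + t) mod q})"
    unfolding window_def by auto
  also have "card \<dots> = (\<Sum>t<d. fibre_card A i ((x + t) mod q))"
    unfolding fibre_card_def using assms
    by (intro card_UN_disjoint) (auto dest: add_mod_left_cancel_less)
  finally show ?thesis .
qed

lemma sum_shift_mod:
  fixes f :: "nat \<Rightarrow> 'a::comm_monoid_add"
  assumes "0 < q"
  shows "(\<Sum>x<q. f ((x + t) mod q)) = (\<Sum>x<q. f x)"
proof -
  have inj: "inj_on (\<lambda>x. (x + t) mod q) {..<q}"
    by (rule inj_onI) (metis add.commute add_mod_left_cancel_less lessThan_iff order_refl)
  have "(\<lambda>x. (x + t) mod q) ` {..<q} = {..<q}"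
    using assms by (intro endo_inj_surj inj) auto
  then show ?thesis
    using sum.reindex[OF inj, of f] by simp
qed

lemma sum_card_window:
  assumes "finite A" "\<forall>a\<in>A. a ! i < q" "d \<le> q" "0 < q"
  shows "(\<Sum>x<q. card (window A i d q x)) = d * card A"
proof -
  have "(\<Sum>x<q. card (window A i d q x)) = (\<Sum>x<q. \<Sum>t<d. fibre_card A i ((x + t) mod q))"
    using card_window[OF assms(1,3)] by simp
  also have "\<dots> = (\<Sum>t<d. \<Sum>x<q. fibre_card A i ((x + t) mod q))"
    by (rule sum.swap)
  also have "\<dots> = (\<Sum>t<d. \<Sum>y<q. fibre_card A i y)"
    using sum_shift_mod[OF assms(4), of "fibre_card A i"] by simp
  also have "\<dots> = d * card A"
    using card_eq_sum_fibre_card[OF assms(1,2)] by simp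
  finally show ?thesis .
qed

lemma circ_dist_window_less:
  assumes "t < d" "t' < d" "d \<le> q" "x < q"
  shows "circ_dist q ((x + t) mod q) ((x + t') mod q) < d"
proof -
  have "(x + s) mod q = (if x + s < q then x + s else x + s - q)" if "s < d" for s
    using that assms by (simp add: mod_if)
  then show ?thesis
    using assms unfolding circ_dist_def Let_def by auto
qed

lemma indep_on_coords_window:
  assumes "indep_on_coords d q (insert i I) A" "\<forall>a\<in>A. a ! i < q" "d \<le> q" "x < q"
  shows "indep_on_coords d q I (window A i d q x)"
  unfolding indep_on_coords_def
proof (intro ballI impI)
  fix u v assume "u \<in> window A i d q x" "v \<in> window A i d q x" "u \<noteq> v"
  then obtain t t' where uv: "u \<in> A" "v \<in> A" "t < d" "t' < d"
    "u ! i = (x + t) mod q" "v ! i = (x + t') mod q"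
    unfolding window_def by auto
  with assms(1) \<open>u \<noteq> v\<close> obtain j where j: "j \<in> insert i I" "u ! j \<noteq> v ! j" "\<not> circ_adj d q (u ! j) (v ! j)"
    unfolding indep_on_coords_def by blast
  have "circ_adj d q (u ! i) (v ! i)" if "u ! i \<noteq> v ! i"
    using that uv assms(2-4) circ_dist_window_less[OF uv(3,4) assms(3,4)] by (simp add: circ_adj_def)
  then have "j \<noteq> i"
    using j by blast
  then show "\<exists>j\<in>I. u ! j \<noteq> v ! j \<and> \<not> circ_adj d q (u ! j) (v ! j)"
    using j by blast
qed

lemma card_le_qseq_Suc_if_card_window_le:
  assumes "q + 1 = r * d" "d \<le> q" "r \<ge> 2" "finite A" "\<forall>a\<in>A. a ! i < q"
    and window_le: "\<And>x. x < q \<Longrightarrow> card (window A i d q x) \<le> qseq r k"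
  shows "card A \<le> qseq r (Suc k)"
proof -
  have "0 < q"
    using assms(1,2) by (cases d) auto
  have "d * card A = (\<Sum>x<q. card (window A i d q x))"
    using sum_card_window[OF assms(4,5,2) \<open>0 < q\<close>] by simp
  also have "\<dots> \<le> q * qseq r k"
    using sum_mono[of "{..<q}" _ "\<lambda>_. qseq r k"] window_le by simp
  also have "\<dots> < r * d * qseq r k"
    using assms(1) qseq_pos[OF assms(3), of k] by simp
  also have "\<dots> = d * (qseq r (Suc k) + 1)"
    using qseq_Suc[OF assms(3)] by simp
  finally have "card A < qseq r (Suc k) + 1"
    using mult_less_cancel1 by blast
  then show ?thesis
    by simp
qed

lemma card_le_qseq_if_indep_on_coords:
  assumes "finite I" "q + 1 = r * d" "d \<le> q"
    and "finite A" "\<forall>a\<in>A. \<forall>i\<in>I. a ! i < q" "indep_on_coords d q I A"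
  shows "card A \<le> qseq r (card I)"
proof -
  have "r \<ge> 2"
  proof (rule ccontr)
    assume "\<not> r \<ge> 2"
    then have "r * d \<le> d"
      by (cases r) auto
    with assms(2,3) show False
      by linarith
  qed
  show ?thesis
    using assms(1,4-6)
  proof (induction I arbitrary: A rule: finite_induct)
    case empty
    then show ?case
      using card_le_1_if_indep_on_coords_empty qseq_0[OF \<open>r \<ge> 2\<close>] by simp
  next
    case (insert i I)
    have coord_i: "\<forall>a\<in>A. a ! i < q"
      using insert.prems(2) by blast
    have "card (window A i d q x) \<le> qseq r (card I)" if "x < q" for x
    proof (rule insert.IH)
      show "finite (window A i d q x)" "\<forall>a\<in>window A i d q x. \<forall>j\<in>I. a ! j < q"
        using insert.prems(1,2) unfolding window_def by simp_all
      show "indep_on_coords d q I (window A i d q x)"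
        using indep_on_coords_window[OF insert.prems(3) coord_i assms(3) that] .
    qed
    then show ?case
      using card_le_qseq_Suc_if_card_window_le[OF assms(2,3) \<open>r \<ge> 2\<close> insert.prems(1) coord_i]
        insert.hyps by simp
  qed
qed

lemma const_if_window_sums_const:
  fixes f :: "nat \<Rightarrow> 'a::cancel_comm_monoid_add"
  assumes window_sum: "\<And>x. (\<Sum>t<d. f ((x + t) mod q)) = c" and "[r * d = 1] (mod q)"
  shows "f (x mod q) = f 0"
proof -
  have period: "f (x mod q) = f ((x + d) mod q)" for x
  proof -
    have "(\<Sum>t<Suc d. f ((x + t) mod q)) = f (x mod q) + c"
      using window_sum[of "Suc x"] by (subst sum.lessThan_Suc_shift) simp
    moreover have "(\<Sum>t<Suc d. f ((x + t) mod q)) = c + f ((x + d) mod q)"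
      using window_sum[of x] by simp
    ultimately show ?thesis
      by (metis add.commute add_left_cancel)
  qed
  have multiple_period: "f (x mod q) = f ((x + m * d) mod q)" for x m
  proof (induction m)
    case (Suc m)
    have "x + Suc m * d = (x + m * d) + d"
      by simp
    then show ?case
      using Suc.IH period[of "x + m * d"] by (simp only:)
  qed simp
  have unit_step: "f (x mod q) = f (Suc x mod q)" for x
  proof -
    have "[x + r * d = x + 1] (mod q)"
      using \<open>[r * d = 1] (mod q)\<close> by (intro cong_add) auto
    then have "(x + r * d) mod q = Suc x mod q"
      by (simp add: cong_def)
    then show ?thesis
      using multiple_period[of x r] by simp
  qed
  show ?thesis
    by (induction x) (simp, metis unit_step)
qed

lemma fibre_card_eq_1_if_extremal:
  assumes "finite B" "\<forall>b\<in>B. b ! i < q" "d \<le> q" "[r * d = 1] (mod q)" "card B = q"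
    and window_le: "\<And>x. x < q \<Longrightarrow> card (window B i d q x) \<le> d"
    and "y < q"
  shows "fibre_card B i y = 1"
proof -
  have "0 < q"
    using \<open>y < q\<close> by simp
  have window_eq: "card (window B i d q x) = d" if "x < q" for x
  proof (rule ccontr)
    assume "card (window B i d q x) \<noteq> d"
    then have "(\<Sum>x<q. card (window B i d q x)) < (\<Sum>x<q. d)"
      using window_le that by (intro sum_strict_mono_ex1) (auto simp: le_less)
    then show False
      using sum_card_window[OF assms(1-3) \<open>0 < q\<close>] assms(5) by simp
  qed
  have "(\<Sum>t<d. fibre_card B i ((x + t) mod q)) = d" for x
    using card_window[OF assms(1,3), of i "x mod q"] window_eq[of "x mod q"] \<open>0 < q\<close>
    by (simp add: mod_add_left_eq)
  from const_if_window_sums_const[OF this assms(4)]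
  have const: "fibre_card B i z = fibre_card B i 0" if "z < q" for z
    using that by (metis mod_less)
  have "q = (\<Sum>z<q. fibre_card B i z)"
    using card_eq_sum_fibre_card[OF assms(1,2)] assms(5) by simp
  also have "\<dots> = (\<Sum>z<q. fibre_card B i 0)"
    by (intro sum.cong refl const) simp
  also have "\<dots> = q * fibre_card B i 0"
    by simp
  finally show ?thesis
    using const[OF \<open>y < q\<close>] \<open>0 < q\<close> by simp
qed

lemma ex1_if_fibre_card_eq_1:
  assumes "fibre_card A i y = 1"
  shows "\<exists>!a. a \<in> A \<and> a ! i = y"
proof -
  obtain a where "{a \<in> A. a ! i = y} = {a}"
    using assms unfolding fibre_card_def by (rule card_1_singletonE)
  then show ?thesis
    by (metis (mono_tags, lifting) mem_Collect_eq singletonD singletonI)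
qed

theorem proposition9p5:
  fixes r n :: nat and B :: "nat list set"
  assumes "r \<ge> 3" and "n \<ge> 1"
    and "indep_strong_pow (qseq r (n - 1)) (qseq r n) n B"
    and "card B = qseq r n"
  shows "\<forall>i<n. \<forall>s<qseq r n. \<exists>!b. b \<in> B \<and> b ! i = s"
proof (intro allI impI)
  fix i s assume "i < n" "s < qseq r n"
  define d q where "d = qseq r (n - 1)" and "q = qseq r n"
  have "r \<ge> 2" and n: "n = Suc (n - 1)"
    using assms(1,2) by simp_all
  have q_eq: "q + 1 = r * d" and "d \<le> q"
    unfolding d_def q_def using qseq_Suc[OF \<open>r \<ge> 2\<close>] qseq_le_Suc[OF \<open>r \<ge> 2\<close>] n by metis+
  have "[r * d = 1] (mod q)"
    unfolding cong_def q_eq[symmetric] by (rule mod_add_self1)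
  have "B \<subseteq> strong_pow_verts q n"
    using assms(3) unfolding indep_strong_pow_def q_def by blast
  then have "finite B" and coords: "\<forall>b\<in>B. \<forall>j\<in>{..<n}. b ! j < q"
    using finite_strong_pow_verts finite_subset unfolding strong_pow_verts_def by blast+
  have indep: "indep_on_coords d q (insert i ({..<n} - {i})) B"
    using indep_on_coords_if_indep_strong_pow[OF assms(3)] \<open>i < n\<close>
    unfolding d_def q_def by (simp add: insert_absorb)
  have "card (window B i d q x) \<le> qseq r (card ({..<n} - {i}))" if "x < q" for x
    using coords \<open>finite B\<close> indep_on_coords_window[OF indep _ \<open>d \<le> q\<close> that] \<open>i < n\<close>
    by (intro card_le_qseq_if_indep_on_coords[OF _ q_eq \<open>d \<le> q\<close>]) (auto simp: window_def)
  then have "fibre_card B i s = 1"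
    using fibre_card_eq_1_if_extremal[OF \<open>finite B\<close> _ \<open>d \<le> q\<close> \<open>[r * d = 1] (mod q)\<close>]
      coords \<open>i < n\<close> assms(4) \<open>s < qseq r n\<close> unfolding d_def q_def by simp
  then show "\<exists>!b. b \<in> B \<and> b ! i = s"
    by (rule ex1_if_fibre_card_eq_1)
qed

end
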